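(* The ladder chain $L(2,2,\sqrt2-1)$ is recurrent; that is, if $\mathbf{S}=(S_n:n\ge1)\sim L(2,2,\sqrt2-1)$ then $\mathbb{P}(S_n\neq 0\text{ for all }n\ge1)=0$.
   Context: Ladder chain: let $\xi_1,\xi_2,\dots$ be i.i.d. with values in $\{1,-1\}$, $\mathbb{P}(\xi_i=1)=p$, $\mathbb{P}(\xi_i=-1)=1-p$, and let $r,s$ be positive integers. Define $X_k=-1$ if $\xi_k=-1$; $X_k=s$ if $k\ge r$ and $\xi_k=\xi_{k-1}=\dots=\xi_{k-r+1}=1$; and $X_k=1$ otherwise. Let $S_n=X_1+\dots+X_n$. The process $\mathbf{S}=(S_n:n\ge1)$ is a ladder chain of order $r$, step $s$, probability $p$, written $\mathbf{S}\sim L(r,s,p)$. A ladder chain is transient if $\mathbb{P}(S_n\neq0\text{ for all }n\ge1)>0$, and recurrent otherwise. *)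

theory Defs
  imports "HOL-Probability.Probability"
begin

text \<open>The i.i.d. sequence xi_1, xi_2, ... is realised canonically on the space of
  boolean streams with the product of Bernoulli(p) measures: xi_k = 1 iff the
  (k-1)-th entry of the stream (0-based) is True, which has probability p.\<close>

definition ladder_space :: "real \<Rightarrow> bool stream measure" where
  "ladder_space p = stream_space (measure_pmf (bernoulli_pmf p))"

definition ladder_xi :: "bool stream \<Rightarrow> nat \<Rightarrow> int" where
  "ladder_xi \<omega> k = (if \<omega> !! (k - 1) then 1 else -1)"

definition ladder_X :: "nat \<Rightarrow> nat \<Rightarrow> bool stream \<Rightarrow> nat \<Rightarrow> int" where
  "ladder_X r s \<omega> k =
     (if ladder_xi \<omega> k = -1 then -1
      else if k \<ge> r \<and> (\<forall>j\<in>{k - r + 1..k}. ladder_xi \<omega> j = 1) then int s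
      else 1)"

definition ladder_S :: "nat \<Rightarrow> nat \<Rightarrow> bool stream \<Rightarrow> nat \<Rightarrow> int" where
  "ladder_S r s \<omega> n = (\<Sum>k = 1..n. ladder_X r s \<omega> k)"

definition ladder_escape :: "nat \<Rightarrow> nat \<Rightarrow> bool stream set" where
  "ladder_escape r s = {\<omega>. \<forall>n\<ge>1. ladder_S r s \<omega> n \<noteq> 0}"

definition ladder_transient :: "nat \<Rightarrow> nat \<Rightarrow> real \<Rightarrow> bool" where
  "ladder_transient r s p \<longleftrightarrow> measure (ladder_space p) (ladder_escape r s) > 0"

end

theory Submission
  imports Defs
begin

text \<open>For order 2 the chain is a Markov chain on the states (S_n, [\<xi>_n = 1]), driven by one coin
  toss per step. For p = \<surd>2 - 1, the root of p^2 + 2p = 1, the height S_n + p[\<xi>_n = 1]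
  is a martingale; by concavity its square root is superharmonic wherever |S_n| \<ge> 3, and it
  tends to infinity. A maximum principle then forces every bounded function that is subharmonic
  off {S = 0} and vanishes there to be nonpositive, and the probability of never returning to 0
  is such a function.\<close>

section \<open>A maximum principle for two-point random walks\<close>

definition step_mean :: "('a \<Rightarrow> bool \<Rightarrow> 'a) \<Rightarrow> real \<Rightarrow> ('a \<Rightarrow> real) \<Rightarrow> 'a \<Rightarrow> real" where
  "step_mean f q g y = q * g (f y True) + (1 - q) * g (f y False)"

lemma submean_max_successor:
  assumes q: "0 < q" "q < 1" and le: "\<And>z. g z \<le> M" and "g y = M"
    and sub: "g y \<le> step_mean f q g y"
  shows "g (f y t) = M"
proof -
  have T: "0 \<le> q * (M - g (f y True))" and F: "0 \<le> (1 - q) * (M - g (f y False))"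
    using q le by simp_all
  have "q * (M - g (f y True)) + (1 - q) * (M - g (f y False)) \<le> 0"
    using sub \<open>g y = M\<close> by (simp add: step_mean_def algebra_simps)
  then have "q * (M - g (f y True)) = 0" "(1 - q) * (M - g (f y False)) = 0"
    using T F by linarith+
  then show ?thesis
    using q by (cases t) auto
qed

lemma maximum_principle:
  fixes d :: "'a \<Rightarrow> nat"
  assumes q: "0 < q" "q < 1"
    and descent: "\<And>y. y \<notin> E \<Longrightarrow> \<exists>t. d (f y t) < d y"
    and sub: "\<And>y. y \<notin> E \<Longrightarrow> g y \<le> step_mean f q g y"
    and le: "\<And>z. g z \<le> M" and "g y = M"
  shows "\<exists>e\<in>E. g e = M"
  using \<open>g y = M\<close>
proof (induction y rule: measure_induct_rule[of d])
  case (less y)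
  show ?case
  proof (cases "y \<in> E")
    case True
    with less.prems show ?thesis by blast
  next
    case False
    then obtain t where "d (f y t) < d y"
      using descent by blast
    moreover have "g (f y t) = M"
      using submean_max_successor[OF q le less.prems sub[OF False]] .
    ultimately show ?thesis
      using less.IH by blast
  qed
qed

lemma finite_superlevel_imp_has_max:
  fixes g :: "'a \<Rightarrow> 'b::linorder"
  assumes "finite {z. g y \<le> g z}"
  shows "\<exists>z. \<forall>w. g w \<le> g z"
proof -
  let ?S = "{z. g y \<le> g z}"
  have "Max (g ` ?S) \<in> g ` ?S"
    using assms by (intro Max_in) auto
  then obtain z where "z \<in> ?S" "g z = Max (g ` ?S)"
    by auto
  then have "g w \<le> g z" for w
  proof (cases "w \<in> ?S")
    case True
    then show ?thesis
      using assms \<open>g z = Max (g ` ?S)\<close> by simp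
  next
    case False
    then show ?thesis
      using \<open>z \<in> ?S\<close> by simp
  qed
  then show ?thesis by blast
qed

locale lyapunov_walk =
  fixes f :: "'a \<Rightarrow> bool \<Rightarrow> 'a" and q :: real and E F :: "'a set"
    and d :: "'a \<Rightarrow> nat" and V :: "'a \<Rightarrow> real"
  assumes q: "0 < q" "q < 1"
    and descent: "\<And>y. y \<notin> E \<Longrightarrow> \<exists>t. d (f y t) < d y"
    and E_subset: "E \<subseteq> F" and finite_F: "finite F"
    and V_super: "\<And>y. y \<notin> F \<Longrightarrow> step_mean f q V y \<le> V y"
    and V_nonneg: "\<And>y. 0 \<le> V y"
    and V_proper: "\<And>R. finite {y. V y \<le> R}"
begin

lemma subharmonic_le_perturbed:
  assumes v_le: "\<And>y. v y \<le> B" and v_sub: "\<And>y. y \<notin> F \<Longrightarrow> v y \<le> step_mean f q v y"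
    and "0 < \<epsilon>"
  shows "\<exists>e\<in>F. v y - \<epsilon> * V y \<le> v e"
proof -
  define g where "g z = v z - \<epsilon> * V z" for z
  have "V z \<le> (B - g y) / \<epsilon>" if "g y \<le> g z" for z
  proof -
    have "\<epsilon> * V z \<le> B - g y"
      using that v_le[of z] by (simp add: g_def)
    then show ?thesis
      using \<open>0 < \<epsilon>\<close> by (simp add: pos_le_divide_eq mult.commute)
  qed
  then have "{z. g y \<le> g z} \<subseteq> {z. V z \<le> (B - g y) / \<epsilon>}"
    by blast
  then have "finite {z. g y \<le> g z}"
    using V_proper by (rule finite_subset)
  then obtain z where max: "\<And>w. g w \<le> g z"
    by (metis finite_superlevel_imp_has_max)
  have sub: "g w \<le> step_mean f q g w" if "w \<notin> F" for w
  proof -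
    have "\<epsilon> * step_mean f q V w \<le> \<epsilon> * V w"
      using V_super[OF that] \<open>0 < \<epsilon>\<close> by simp
    moreover have "step_mean f q g w = step_mean f q v w - \<epsilon> * step_mean f q V w"
      by (simp add: g_def step_mean_def algebra_simps)
    ultimately show ?thesis
      using v_sub[OF that] by (simp add: g_def)
  qed
  have descent_F: "w \<notin> F \<Longrightarrow> \<exists>t. d (f w t) < d w" for w
    using descent E_subset by blast
  obtain e where "e \<in> F" "g e = g z"
    using maximum_principle[OF q descent_F sub max] by blast
  moreover have "g y \<le> g z" "g e \<le> v e"
    using max V_nonneg[of e] \<open>0 < \<epsilon>\<close> by (simp_all add: g_def)
  ultimately have "g y \<le> v e"
    by simp
  with \<open>e \<in> F\<close> show ?thesis
    by (auto simp: g_def)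
qed

lemma subharmonic_max_in_finite:
  assumes v_le: "\<And>y. v y \<le> B" and v_sub: "\<And>y. y \<notin> F \<Longrightarrow> v y \<le> step_mean f q v y"
  shows "\<exists>e\<in>F. \<forall>y. v y \<le> v e"
proof -
  have "F \<noteq> {}"
    using subharmonic_le_perturbed[OF v_le v_sub, of 1] by auto
  define m where "m = Max (v ` F)"
  have "v y \<le> m" for y
  proof (rule field_le_epsilon)
    fix \<delta> :: real
    assume "0 < \<delta>"
    define \<epsilon> where "\<epsilon> = \<delta> / (V y + 1)"
    have "0 < \<epsilon>"
      using \<open>0 < \<delta>\<close> V_nonneg[of y] by (simp add: \<epsilon>_def)
    then obtain e where "e \<in> F" "v y - \<epsilon> * V y \<le> v e"
      using subharmonic_le_perturbed[OF v_le v_sub] by blast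
    moreover have "v e \<le> m"
      using \<open>e \<in> F\<close> finite_F by (simp add: m_def)
    moreover have "\<epsilon> * V y \<le> \<delta>"
      using \<open>0 < \<delta>\<close> V_nonneg[of y] by (simp add: \<epsilon>_def field_simps)
    ultimately show "v y \<le> m + \<delta>" by linarith
  qed
  moreover have "m \<in> v ` F"
    using finite_F \<open>F \<noteq> {}\<close> by (simp add: m_def)
  ultimately show ?thesis by auto
qed

theorem subharmonic_nonpos:
  assumes v_le: "\<And>y. v y \<le> B" and v_sub: "\<And>y. y \<notin> E \<Longrightarrow> v y \<le> step_mean f q v y"
    and v_E: "\<And>y. y \<in> E \<Longrightarrow> v y \<le> 0"
  shows "v y \<le> 0"
proof -
  have "y \<notin> F \<Longrightarrow> v y \<le> step_mean f q v y" for y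
    using v_sub E_subset by blast
  from subharmonic_max_in_finite[OF v_le this]
  obtain e0 where max: "\<And>y. v y \<le> v e0"
    by blast
  then obtain e where "e \<in> E" "v e = v e0"
    using maximum_principle[OF q descent v_sub max] by blast
  then show ?thesis
    using max[of y] v_E[of e] by simp
qed

end

section \<open>A Lyapunov function for the ladder chain of order 2 and step 2\<close>

text \<open>A state (h, b) of the ladder chain of order 2 and step s records S_n = h and whether
  \<xi>_n = 1; a coin toss t (standing for \<xi>_(n+1) = 1) moves it to the next state.\<close>

definition ladder_step :: "nat \<Rightarrow> int \<times> bool \<Rightarrow> bool \<Rightarrow> int \<times> bool" where
  "ladder_step s x t =
     (if t then (fst x + (if snd x then int s else 1), True) else (fst x - 1, False))"

text \<open>Negative states get one extra unit because an up-step from (-1, True) overshoots to 1.\<close>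

definition ladder_rank :: "int \<times> bool \<Rightarrow> nat" where
  "ladder_rank x = nat \<bar>fst x\<bar> + (if fst x < 0 then 1 else 0)"

lemma ladder_rank_descent:
  assumes "fst x \<noteq> 0"
  shows "\<exists>t. ladder_rank (ladder_step 2 x t) < ladder_rank x"
proof (cases "0 < fst x")
  case True
  then have "ladder_rank (ladder_step 2 x False) < ladder_rank x"
    by (simp add: ladder_rank_def ladder_step_def)
  then show ?thesis ..
next
  case False
  with assms have "ladder_rank (ladder_step 2 x True) < ladder_rank x"
    by (auto simp: ladder_rank_def ladder_step_def)
  then show ?thesis ..
qed

definition ladder_height :: "real \<Rightarrow> int \<times> bool \<Rightarrow> real" where
  "ladder_height p x = of_int (fst x) + (if snd x then p else 0)"

lemma step_mean_ladder_height:
  assumes "p^2 + 2 * p = 1"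
  shows "step_mean (ladder_step 2) p (ladder_height p) x = ladder_height p x"
  using assms
  by (cases "snd x")
    (auto simp: step_mean_def ladder_step_def ladder_height_def power2_eq_square algebra_simps)

lemma convex_combination_sqrt_le:
  fixes a b q :: real
  assumes "0 \<le> a" "0 \<le> b" "0 \<le> q" "q \<le> 1"
  shows "q * sqrt a + (1 - q) * sqrt b \<le> sqrt (q * a + (1 - q) * b)"
proof (rule real_le_rsqrt)
  define s t where "s = sqrt a" and "t = sqrt b"
  have "a = s^2" "b = t^2"
    using assms by (simp_all add: s_def t_def)
  then have "q * a + (1 - q) * b - (q * s + (1 - q) * t)^2 = q * (1 - q) * (s - t)^2"
    by (simp add: power2_eq_square algebra_simps)
  moreover have "0 \<le> q * (1 - q) * (s - t)^2"
    using assms by simp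
  ultimately show "(q * sqrt a + (1 - q) * sqrt b)^2 \<le> q * a + (1 - q) * b"
    unfolding s_def t_def by linarith
qed

definition ladder_lyapunov :: "real \<Rightarrow> int \<times> bool \<Rightarrow> real" where
  "ladder_lyapunov p x = sqrt \<bar>ladder_height p x\<bar>"

lemma ladder_lyapunov_super:
  assumes p: "0 \<le> p" "p \<le> 1" "p^2 + 2 * p = 1" and "3 \<le> \<bar>fst x\<bar>"
  shows "step_mean (ladder_step 2) p (ladder_lyapunov p) x \<le> ladder_lyapunov p x"
proof -
  let ?Y = "ladder_height p" and ?T = "ladder_step 2 x True" and ?F = "ladder_step 2 x False"
  txt \<open>Away from 0 one step cannot change the sign of the height.\<close>
  obtain \<sigma> :: real where "\<bar>?Y x\<bar> = \<sigma> * ?Y x" "\<bar>?Y ?T\<bar> = \<sigma> * ?Y ?T" "\<bar>?Y ?F\<bar> = \<sigma> * ?Y ?F"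
  proof (cases "0 < fst x")
    case True
    with assms have "0 \<le> ?Y x" "0 \<le> ?Y ?T" "0 \<le> ?Y ?F"
      by (auto simp: ladder_height_def ladder_step_def)
    then show ?thesis
      by (intro that[of 1]) simp_all
  next
    case False
    with assms have "?Y x \<le> 0" "?Y ?T \<le> 0" "?Y ?F \<le> 0"
      by (auto simp: ladder_height_def ladder_step_def)
    then show ?thesis
      by (intro that[of "-1"]) simp_all
  qed
  note abs_eq = this
  have "step_mean (ladder_step 2) p (ladder_lyapunov p) x
      = p * sqrt (\<sigma> * ?Y ?T) + (1 - p) * sqrt (\<sigma> * ?Y ?F)"
    by (simp add: step_mean_def ladder_lyapunov_def abs_eq)
  also have "\<dots> \<le> sqrt (p * (\<sigma> * ?Y ?T) + (1 - p) * (\<sigma> * ?Y ?F))"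
    using p abs_eq by (intro convex_combination_sqrt_le) (simp_all flip: abs_eq)
  also have "p * (\<sigma> * ?Y ?T) + (1 - p) * (\<sigma> * ?Y ?F) = \<sigma> * ?Y x"
    using step_mean_ladder_height[OF p(3), of x] unfolding step_mean_def
    by (metis distrib_left mult.left_commute)
  also have "sqrt (\<sigma> * ?Y x) = ladder_lyapunov p x"
    by (simp add: ladder_lyapunov_def abs_eq)
  finally show ?thesis .
qed

lemma finite_ladder_lyapunov_sublevel:
  assumes "0 \<le> p" "p \<le> 1"
  shows "finite {x. ladder_lyapunov p x \<le> R}"
proof -
  define N where "N = \<lceil>R^2\<rceil> + 1"
  have bound: "\<bar>fst x\<bar> \<le> N" if "ladder_lyapunov p x \<le> R" for x
  proof -
    have "\<bar>ladder_height p x\<bar> \<le> R^2"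
      using that by (simp add: ladder_lyapunov_def sqrt_le_D)
    moreover have "\<bar>of_int (fst x)\<bar> \<le> \<bar>ladder_height p x\<bar> + 1"
      using assms by (auto simp: ladder_height_def)
    ultimately show ?thesis
      unfolding N_def by linarith
  qed
  have "{x. ladder_lyapunov p x \<le> R} \<subseteq> {-N..N} \<times> UNIV"
  proof
    fix x
    assume "x \<in> {x. ladder_lyapunov p x \<le> R}"
    then have "\<bar>fst x\<bar> \<le> N"
      using bound by simp
    then show "x \<in> {-N..N} \<times> UNIV"
      by (cases x) auto
  qed
  then show ?thesis
    by (rule finite_subset) simp
qed

lemma ladder_lyapunov_walk:
  assumes "0 < p" "p < 1" "p^2 + 2 * p = 1"
  shows "lyapunov_walk (ladder_step 2) p {x. fst x = 0} {x. \<bar>fst x\<bar> < 3} ladder_rank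
           (ladder_lyapunov p)"
proof
  have "{x :: int \<times> bool. \<bar>fst x\<bar> < 3} \<subseteq> {-2..2} \<times> UNIV"
    by (auto simp: mem_Times_iff)
  then show "finite {x :: int \<times> bool. \<bar>fst x\<bar> < 3}"
    by (rule finite_subset) simp
qed (use assms ladder_rank_descent ladder_lyapunov_super finite_ladder_lyapunov_sublevel in
      \<open>auto simp: ladder_lyapunov_def\<close>)

section \<open>The escape probability\<close>

primrec ladder_walk :: "nat \<Rightarrow> int \<times> bool \<Rightarrow> bool stream \<Rightarrow> nat \<Rightarrow> int \<times> bool" where
  "ladder_walk s x \<omega> 0 = x"
| "ladder_walk s x \<omega> (Suc n) = ladder_step s (ladder_walk s x \<omega> n) (\<omega> !! n)"

lemma ladder_walk_Stream:
  "ladder_walk s x (t ## \<omega>) (Suc n) = ladder_walk s (ladder_step s x t) \<omega> n"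
  by (induction n) simp_all

lemma measurable_ladder_walk:
  "(\<lambda>\<omega>. ladder_walk s x \<omega> n) \<in> ladder_space q \<rightarrow>\<^sub>M count_space UNIV"
proof (induction n)
  case 0
  then show ?case by simp
next
  case (Suc n)
  have "(\<lambda>\<omega>. ladder_step s y (\<omega> !! n)) \<in> ladder_space q \<rightarrow>\<^sub>M count_space UNIV" for y
    unfolding ladder_space_def by measurable
  then show ?case
    unfolding ladder_walk.simps
    by (rule measurable_compose_countable[where f="\<lambda>y \<omega>. ladder_step s y (\<omega> !! n)", OF _ Suc.IH])
qed

lemma measurable_ladder_walk_count_space[measurable]:
  "(\<lambda>\<omega>. g (ladder_walk s x \<omega> n)) \<in> ladder_space q \<rightarrow>\<^sub>M count_space UNIV"
  by (rule measurable_compose[OF measurable_ladder_walk measurable_count_space])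

lemma space_ladder_space: "space (ladder_space q) = UNIV"
  by (simp add: ladder_space_def space_stream_space)

lemma prob_space_ladder_space: "prob_space (ladder_space q)"
  unfolding ladder_space_def by (rule prob_space.prob_space_stream_space) (rule prob_space_measure_pmf)

lemma measure_ladder_space_Stream:
  assumes "0 \<le> q" "q \<le> 1" and X: "X \<in> sets (ladder_space q)"
  shows "measure (ladder_space q) X = q * measure (ladder_space q) {\<omega>. True ## \<omega> \<in> X}
           + (1 - q) * measure (ladder_space q) {\<omega>. False ## \<omega> \<in> X}"
proof -
  let ?M = "ladder_space q"
  interpret prob_space ?M
    by (rule prob_space_ladder_space)
  have "emeasure ?M X = (\<integral>\<^sup>+t. emeasure ?M {\<omega>. t ## \<omega> \<in> X} \<partial>measure_pmf (bernoulli_pmf q))"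
    using prob_space.emeasure_stream_space[OF prob_space_measure_pmf X[unfolded ladder_space_def]]
    by (simp add: ladder_space_def space_stream_space)
  also have "\<dots> = ennreal (q * measure ?M {\<omega>. True ## \<omega> \<in> X}
                     + (1 - q) * measure ?M {\<omega>. False ## \<omega> \<in> X})"
    using assms by (simp add: emeasure_eq_measure ennreal_mult ennreal_plus ac_simps)
  finally have "ennreal (measure ?M X) = ennreal (q * measure ?M {\<omega>. True ## \<omega> \<in> X}
                     + (1 - q) * measure ?M {\<omega>. False ## \<omega> \<in> X})"
    by (simp add: emeasure_eq_measure)
  then show ?thesis
    using assms by (subst (asm) ennreal_inj) auto
qed

definition avoids_zero :: "nat \<Rightarrow> int \<times> bool \<Rightarrow> bool stream set" where
  "avoids_zero s x = {\<omega>. \<forall>n. fst (ladder_walk s x \<omega> n) \<noteq> 0}"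

lemma avoids_zero_sets: "avoids_zero s x \<in> sets (ladder_space q)"
proof -
  have "avoids_zero s x = {\<omega>\<in>space (ladder_space q). \<forall>n. fst (ladder_walk s x \<omega> n) \<noteq> 0}"
    by (simp add: avoids_zero_def space_ladder_space)
  also have "\<dots> \<in> sets (ladder_space q)"
    by measurable
  finally show ?thesis .
qed

lemma avoids_zero_eq_empty: "fst x = 0 \<Longrightarrow> avoids_zero s x = {}"
  unfolding avoids_zero_def by (metis (mono_tags, lifting) empty_Collect_eq ladder_walk.simps(1))

lemma Stream_in_avoids_zero:
  assumes "fst x \<noteq> 0"
  shows "t ## \<omega> \<in> avoids_zero s x \<longleftrightarrow> \<omega> \<in> avoids_zero s (ladder_step s x t)"
proof -
  have "(\<forall>n. P n) \<longleftrightarrow> P 0 \<and> (\<forall>n. P (Suc n))" for P :: "nat \<Rightarrow> bool"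
    by (metis not0_implies_Suc)
  from this[of "\<lambda>n. fst (ladder_walk s x (t ## \<omega>) n) \<noteq> 0"] assms show ?thesis
    by (simp add: avoids_zero_def ladder_walk_Stream del: ladder_walk.simps(2))
qed

definition escape_prob :: "nat \<Rightarrow> real \<Rightarrow> int \<times> bool \<Rightarrow> real" where
  "escape_prob s q x = measure (ladder_space q) (avoids_zero s x)"

lemma escape_prob_harmonic:
  assumes "0 \<le> q" "q \<le> 1" "fst x \<noteq> 0"
  shows "escape_prob s q x = step_mean (ladder_step s) q (escape_prob s q) x"
  using measure_ladder_space_Stream[OF assms(1,2) avoids_zero_sets]
  by (simp add: escape_prob_def step_mean_def Stream_in_avoids_zero[OF assms(3)])

lemma escape_prob_eq_0:
  assumes "0 < p" "p < 1" "p^2 + 2 * p = 1"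
  shows "escape_prob 2 p x = 0"
proof -
  interpret lyapunov_walk "ladder_step 2" p "{x. fst x = 0}" "{x. \<bar>fst x\<bar> < 3}" ladder_rank
      "ladder_lyapunov p"
    using assms by (rule ladder_lyapunov_walk)
  have "escape_prob 2 p x \<le> 0"
  proof (rule subharmonic_nonpos)
    show "escape_prob 2 p y \<le> 1" for y
      using prob_space.prob_le_1[OF prob_space_ladder_space] by (simp add: escape_prob_def)
    show "escape_prob 2 p y \<le> step_mean (ladder_step 2) p (escape_prob 2 p) y"
      if "y \<notin> {x. fst x = 0}" for y
      using assms that escape_prob_harmonic[of p y] by simp
    show "y \<in> {x. fst x = 0} \<Longrightarrow> escape_prob 2 p y \<le> 0" for y
      by (simp add: escape_prob_def avoids_zero_eq_empty)
  qed
  then show ?thesis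
    by (simp add: escape_prob_def antisym)
qed

lemma ladder_X_order_2_Suc:
  "ladder_X 2 s \<omega> (Suc n) = (if \<omega> !! n then if 0 < n \<and> \<omega> !! (n - 1) then int s else 1 else -1)"
proof (cases n)
  case 0
  then show ?thesis
    by (simp add: ladder_X_def ladder_xi_def)
next
  case (Suc m)
  then have "{Suc n - 2 + 1..Suc n} = {n, Suc n}"
    by auto
  with Suc show ?thesis
    by (auto simp: ladder_X_def ladder_xi_def)
qed

lemma ladder_walk_from_origin:
  "ladder_walk s (0, False) \<omega> n = (ladder_S 2 s \<omega> n, 0 < n \<and> \<omega> !! (n - 1))"
proof (induction n)
  case 0
  then show ?case
    by (simp add: ladder_S_def)
next
  case (Suc n)
  have "ladder_S 2 s \<omega> (Suc n) = ladder_S 2 s \<omega> n + ladder_X 2 s \<omega> (Suc n)"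
    by (simp add: ladder_S_def)
  with Suc show ?case
    by (simp add: ladder_X_order_2_Suc ladder_step_def)
qed

lemma ladder_escape_order_2:
  "ladder_escape 2 s = {\<omega>. \<forall>n. fst (ladder_walk s (0, False) \<omega> (Suc n)) \<noteq> 0}"
proof -
  have "(\<forall>n\<ge>1. P n) \<longleftrightarrow> (\<forall>n. P (Suc n))" for P :: "nat \<Rightarrow> bool"
    by (metis Suc_le_eq not0_implies_Suc zero_less_Suc One_nat_def less_one not_le)
  then show ?thesis
    by (simp add: ladder_escape_def ladder_walk_from_origin del: ladder_walk.simps(2))
qed

lemma ladder_escape_sets: "ladder_escape 2 s \<in> sets (ladder_space q)"
proof -
  have "ladder_escape 2 s
      = {\<omega>\<in>space (ladder_space q). \<forall>n. fst (ladder_walk s (0, False) \<omega> (Suc n)) \<noteq> 0}"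
    by (simp add: ladder_escape_order_2 space_ladder_space)
  also have "\<dots> \<in> sets (ladder_space q)"
    by measurable
  finally show ?thesis .
qed

lemma measure_ladder_escape:
  assumes "0 \<le> q" "q \<le> 1"
  shows "measure (ladder_space q) (ladder_escape 2 s)
           = step_mean (ladder_step s) q (escape_prob s q) (0, False)"
proof -
  have "t ## \<omega> \<in> ladder_escape 2 s \<longleftrightarrow> \<omega> \<in> avoids_zero s (ladder_step s (0, False) t)" for t \<omega>
    by (simp add: ladder_escape_order_2 avoids_zero_def ladder_walk_Stream del: ladder_walk.simps(2))
  then show ?thesis
    using measure_ladder_space_Stream[OF assms ladder_escape_sets]
    by (simp add: step_mean_def escape_prob_def)
qed

lemma sqrt2_minus_1:
  "0 < sqrt 2 - (1::real)" "sqrt 2 - 1 < (1::real)" "(sqrt 2 - 1)^2 + 2 * (sqrt 2 - 1) = (1::real)"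
proof -
  have "1 < sqrt (2::real)" "sqrt (2::real) < 2"
    by (simp_all add: real_less_rsqrt real_sqrt_less_iff real_less_lsqrt)
  then show "0 < sqrt 2 - (1::real)" "sqrt 2 - 1 < (1::real)"
    by simp_all
  show "(sqrt 2 - 1)^2 + 2 * (sqrt 2 - 1) = (1::real)"
    by (simp add: power2_diff)
qed

theorem theorem4p4:
  shows "ladder_escape 2 2 \<in> sets (ladder_space (sqrt 2 - 1))
         \<and> measure (ladder_space (sqrt 2 - 1)) (ladder_escape 2 2) = 0"
proof
  show "ladder_escape 2 2 \<in> sets (ladder_space (sqrt 2 - 1))"
    by (rule ladder_escape_sets)
  have "measure (ladder_space (sqrt 2 - 1)) (ladder_escape 2 2)
      = step_mean (ladder_step 2) (sqrt 2 - 1) (escape_prob 2 (sqrt 2 - 1)) (0, False)"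
    using sqrt2_minus_1(1,2) by (intro measure_ladder_escape) simp_all
  also have "\<dots> = 0"
    using escape_prob_eq_0[OF sqrt2_minus_1] by (simp add: step_mean_def)
  finally show "measure (ladder_space (sqrt 2 - 1)) (ladder_escape 2 2) = 0" .
qed

end
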